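(* Let $d\ge2$, let $a:\mathbb{Z}^d\curvearrowright X$ be a free Borel action, let $S=\{\pm e_1,\dots,\pm e_d\}$ be the standard generating set of $\mathbb{Z}^d$, and let $U''$ be a single $\mathbb{Z}^d$-orbit. Let $U,V\subseteq U''$ be such that the $G(a,S)$-path distance between $U$ and $V$ is greater than $4d+1$, and let $c$ be an edge coloring of $G(a,S)\upharpoonright(U\cup V)$ with colors $\{1,\dots,2d\}$ which follows protocol $x_0$ on $U$ and protocol $x_1$ on $V$, for some $x_0,x_1\in U''$. Then $c$ can be extended to an edge coloring of $G(a,S)\upharpoonright U''$ with colors $\{1,\dots,2d\}$ which still follows protocol $x_0$ on $U$ and protocol $x_1$ on $V$.
   Context: $e_i\in\mathbb{Z}^d$ has $1$ in coordinate $i$ and $0$ elsewhere. $G(a,S)$ is the Schreier graph: $x,y$ adjacent iff $y=\gamma\cdot x$ for some $\gamma\in S$; each edge has the unique form $(x,e_i\cdot x)$. An edge coloring gives distinct colors to edges sharing a vertex. Protocol: for $U\subseteq U'\subseteq U''$, an edge coloring $c$ of $G(a,S)\upharpoonright U'$ and $x_0\in U''$, $c$ follows protocol $x_0$ on $U$ if every edge $(x,e_i\cdot x)$ of $G(a,S)\upharpoonright U'$ meeting $U$ receives color $2i-1$ if $a_i$ is even and color $2i$ if $a_i$ is odd, where $(a_1,\dots,a_d)\in\mathbb{Z}^d$ is the unique element with $(a_1,\dots,a_d)\cdot x_0=x$. *)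

theory Defs
  imports "HOL-Analysis.Analysis"
begin

definition Zd :: "nat \<Rightarrow> (nat \<Rightarrow> int) set" where
  "Zd d = {g. \<forall>i. g i \<noteq> 0 \<longrightarrow> i \<in> {1..d}}"

definition unitvec :: "nat \<Rightarrow> (nat \<Rightarrow> int)" where
  "unitvec i = (\<lambda>j. if j = i then 1 else 0)"

definition is_action :: "nat \<Rightarrow> 'x set \<Rightarrow> ((nat \<Rightarrow> int) \<Rightarrow> 'x \<Rightarrow> 'x) \<Rightarrow> bool" where
  "is_action d X a \<longleftrightarrow>
     (\<forall>g\<in>Zd d. \<forall>x\<in>X. a g x \<in> X) \<and>
     (\<forall>x\<in>X. a (\<lambda>_. 0) x = x) \<and>
     (\<forall>g\<in>Zd d. \<forall>h\<in>Zd d. \<forall>x\<in>X. a (\<lambda>j. g j + h j) x = a g (a h x))"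

definition free_action :: "nat \<Rightarrow> 'x set \<Rightarrow> ((nat \<Rightarrow> int) \<Rightarrow> 'x \<Rightarrow> 'x) \<Rightarrow> bool" where
  "free_action d X a \<longleftrightarrow> is_action d X a \<and> (\<forall>g\<in>Zd d. \<forall>x\<in>X. a g x = x \<longrightarrow> g = (\<lambda>_. 0))"

definition orbit :: "nat \<Rightarrow> ((nat \<Rightarrow> int) \<Rightarrow> 'x \<Rightarrow> 'x) \<Rightarrow> 'x \<Rightarrow> 'x set" where
  "orbit d a x = {a g x | g. g \<in> Zd d}"

definition schreier_adj :: "nat \<Rightarrow> 'x set \<Rightarrow> ((nat \<Rightarrow> int) \<Rightarrow> 'x \<Rightarrow> 'x) \<Rightarrow> ('x \<times> 'x) set" where
  "schreier_adj d X a = {(x, y). x \<in> X \<and> y \<in> X \<and>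
      (\<exists>i\<in>{1..d}. y = a (unitvec i) x \<or> y = a (\<lambda>j. - unitvec i j) x)}"

definition path_dist_gt :: "nat \<Rightarrow> 'x set \<Rightarrow> ((nat \<Rightarrow> int) \<Rightarrow> 'x \<Rightarrow> 'x) \<Rightarrow> 'x set \<Rightarrow> 'x set \<Rightarrow> nat \<Rightarrow> bool" where
  "path_dist_gt d X a U V r \<longleftrightarrow>
     (\<forall>u\<in>U. \<forall>v\<in>V. \<forall>n\<le>r. (u, v) \<notin> (schreier_adj d X a) ^^ n)"

text \<open>Edges of \<open>G(a,S)\<restriction>U'\<close>: the edge \<open>(x, e_i\<cdot>x)\<close> is represented by the pair \<open>(x,i)\<close>.\<close>
definition sedges :: "nat \<Rightarrow> ((nat \<Rightarrow> int) \<Rightarrow> 'x \<Rightarrow> 'x) \<Rightarrow> 'x set \<Rightarrow> ('x \<times> nat) set" where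
  "sedges d a U' = {(x, i). i \<in> {1..d} \<and> x \<in> U' \<and> a (unitvec i) x \<in> U'}"

definition sends :: "((nat \<Rightarrow> int) \<Rightarrow> 'x \<Rightarrow> 'x) \<Rightarrow> 'x \<times> nat \<Rightarrow> 'x set" where
  "sends a e = {fst e, a (unitvec (snd e)) (fst e)}"

definition is_edge_coloring ::
  "nat \<Rightarrow> ((nat \<Rightarrow> int) \<Rightarrow> 'x \<Rightarrow> 'x) \<Rightarrow> 'x set \<Rightarrow> nat \<Rightarrow> ('x \<times> nat \<Rightarrow> nat) \<Rightarrow> bool" where
  "is_edge_coloring d a U' k c \<longleftrightarrow>
     (\<forall>e\<in>sedges d a U'. c e \<in> {1..k}) \<and>
     (\<forall>e\<in>sedges d a U'. \<forall>f\<in>sedges d a U'.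
        e \<noteq> f \<and> sends a e \<inter> sends a f \<noteq> {} \<longrightarrow> c e \<noteq> c f)"

definition coords :: "nat \<Rightarrow> ((nat \<Rightarrow> int) \<Rightarrow> 'x \<Rightarrow> 'x) \<Rightarrow> 'x \<Rightarrow> 'x \<Rightarrow> (nat \<Rightarrow> int)" where
  "coords d a x0 x = (THE g. g \<in> Zd d \<and> a g x0 = x)"

definition follows_protocol ::
  "nat \<Rightarrow> ((nat \<Rightarrow> int) \<Rightarrow> 'x \<Rightarrow> 'x) \<Rightarrow> 'x set \<Rightarrow> ('x \<times> nat \<Rightarrow> nat) \<Rightarrow> 'x \<Rightarrow> 'x set \<Rightarrow> bool" where
  "follows_protocol d a U' c x0 U \<longleftrightarrow>
     (\<forall>(x, i)\<in>sedges d a U'. (x \<in> U \<or> a (unitvec i) x \<in> U) \<longrightarrow>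
        c (x, i) = (if even (coords d a x0 x i) then 2 * i - 1 else 2 * i))"

end

theory Submission
  imports Defs
begin

text \<open>
  Since the action is free, \<open>g \<mapsto> g \<cdot> x0\<close> identifies the orbit with the grid \<open>\<int>\<^sup>d\<close>, and the
  two protocols become the colourings giving the edge \<open>(g, g + e\<^sub>m)\<close> the colour \<open>2m - 1\<close> or \<open>2m\<close>
  according to the parity of \<open>g\<^sub>m\<close>, resp. of \<open>g\<^sub>m - \<delta>\<^sub>m\<close>, where \<open>\<delta>\<close> are the coordinates of \<open>x1\<close>.
  Let \<open>D\<close> be the graph distance from \<open>U\<close> capped at \<open>4d + 2\<close>: it is \<open>0\<close> on \<open>U\<close>, \<open>4d + 2\<close> on \<open>V\<close>
  and \<open>1\<close>-Lipschitz. Direction \<open>k\<close> switches from the first protocol to the second around the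
  level \<open>D = 4k - 2\<close>, so different directions switch in disjoint layers. If \<open>\<delta>\<^sub>k\<close> is even
  the protocols agree on \<open>k\<close>-edges; if it is odd, the switch makes two consecutive \<open>k\<close>-edges want
  the same colour. Such a flip edge takes a colour of a partner direction \<open>j\<close> instead, and the
  \<open>j\<close>-edges of the \<open>2 \<times> 2\<close> square at the flip take the two \<open>k\<close>-colours in exchange. These squares
  are kept apart by making the switching region constant on the blocks \<open>{2t, 2t + 1}\<close> of the
  \<open>j\<close>-coordinate and smoothing it along direction \<open>k\<close>, so that flip edges are isolated on their
  line.
\<close>

section \<open>Grid combinatorics\<close>

definition shift :: "nat \<Rightarrow> int \<Rightarrow> (nat \<Rightarrow> int) \<Rightarrow> nat \<Rightarrow> int" where
  "shift k t g = g(k := g k + t)"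

lemma shift_same [simp]: "shift k t g k = g k + t"
  by (simp add: shift_def)

lemma shift_other [simp]: "j \<noteq> k \<Longrightarrow> shift k t g j = g j"
  by (simp add: shift_def)

lemma shift_shift [simp]: "shift k s (shift k t g) = shift k (t + s) g"
  by (simp add: shift_def add.assoc)

lemma shift_0 [simp]: "shift k 0 g = g"
  by (simp add: shift_def)

lemma shift_commute: "j \<noteq> k \<Longrightarrow> shift j s (shift k t g) = shift k t (shift j s g)"
  by (auto simp add: shift_def fun_eq_iff)

lemma shift_fun_upd: "j \<noteq> k \<Longrightarrow> shift k t (g(j := v)) = (shift k t g)(j := v)"
  by (auto simp add: shift_def fun_eq_iff)

text \<open>At a vertex \<open>g\<close> of the grid, the edge in direction \<open>m\<close> leaving \<open>g\<close> (\<open>s = True\<close>)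
  starts at \<open>g\<close>, the one entering \<open>g\<close> (\<open>s = False\<close>) starts at \<open>g - e\<^sub>m\<close>.\<close>
definition edge_start :: "(nat \<Rightarrow> int) \<Rightarrow> nat \<Rightarrow> bool \<Rightarrow> nat \<Rightarrow> int" where
  "edge_start g m s = (if s then g else shift m (-1) g)"

lemma half_edges_of_shared_vertex:
  assumes "h \<in> {g, shift i 1 g}" and "h \<in> {g', shift i' 1 g'}" and "(g, i) \<noteq> (g', i')"
  shows "g = edge_start h i (h = g) \<and> g' = edge_start h i' (h = g') \<and> (i, h = g) \<noteq> (i', h = g')"
proof -
  have start: "x = edge_start h m (h = x)" if "h \<in> {x, shift m 1 x}" for x m
    using that by (auto simp: edge_start_def)
  show ?thesis
    using start[OF assms(1)] start[OF assms(2)] assms(3) by (metis prod.inject)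
qed

definition protocol_color :: "(nat \<Rightarrow> int) \<Rightarrow> nat \<Rightarrow> (nat \<Rightarrow> int) \<Rightarrow> nat" where
  "protocol_color p m g = (if even (g m - p m) then 2 * m - 1 else 2 * m)"

lemma protocol_color_class: "protocol_color p m g \<in> {2 * m - 1, 2 * m}"
  by (simp add: protocol_color_def)

lemma inj_on_by_color_class:
  fixes col cls :: "'a \<Rightarrow> nat"
  assumes in_class: "\<And>p. p \<in> P \<Longrightarrow> 1 \<le> cls p \<and> col p \<in> {2 * cls p - 1, 2 * cls p}"
    and within: "\<And>p q. p \<in> P \<Longrightarrow> q \<in> P \<Longrightarrow> p \<noteq> q \<Longrightarrow> cls p = cls q \<Longrightarrow> col p \<noteq> col q"
  shows "inj_on col P"
proof (rule inj_onI, rule ccontr)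
  fix p q assume p: "p \<in> P" and q: "q \<in> P" and eq: "col p = col q" and "p \<noteq> q"
  have "cls p = (col p + 1) div 2" "cls q = (col q + 1) div 2"
    using in_class[OF p] in_class[OF q] by auto
  then show False using within[OF p q \<open>p \<noteq> q\<close>] eq by simp
qed

lemma inj_on_colors_swapped_pair:
  fixes col :: "nat \<Rightarrow> bool \<Rightarrow> nat"
  assumes "1 \<le> k" and "1 \<le> j" and "k \<noteq> j"
    and others: "\<And>m s. m \<in> M \<Longrightarrow> m \<noteq> k \<Longrightarrow> m \<noteq> j \<Longrightarrow>
      1 \<le> m \<and> col m s \<in> {2 * m - 1, 2 * m} \<and> col m True \<noteq> col m False"
    and swapped_colors: "col k sk \<in> {2 * k - 1, 2 * k}" "col k (\<not> sk) \<in> {2 * j - 1, 2 * j}"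
      "col j sj \<in> {2 * k - 1, 2 * k}" "col j (\<not> sj) \<in> {2 * j - 1, 2 * j}"
    and swapped_distinct: "col k sk \<noteq> col j sj" "col k (\<not> sk) \<noteq> col j (\<not> sj)"
  shows "inj_on (case_prod col) (M \<times> UNIV)"
proof (rule inj_on_by_color_class)
  define K where "K = {(k, sk), (j, sj)}"
  define J where "J = {(k, \<not> sk), (j, \<not> sj)}"
  define cls where "cls p = (if p \<in> K then k else if p \<in> J then j else fst p)" for p
  have cls_K: "cls p = k" if "p \<in> K" for p
    using that unfolding cls_def by simp
  have cls_J: "cls p = j" if "p \<in> J" for p
    using that \<open>k \<noteq> j\<close> unfolding cls_def K_def J_def by auto
  have swapped: "p \<in> K \<union> J" if "fst p \<in> {k, j}" for p
    using that unfolding K_def J_def by (cases p) auto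
  have cls_other: "cls p = fst p" if "fst p \<notin> {k, j}" for p
    using that unfolding cls_def K_def J_def by auto
  show "1 \<le> cls p \<and> case_prod col p \<in> {2 * cls p - 1, 2 * cls p}" if "p \<in> M \<times> UNIV" for p
  proof (cases "fst p \<in> {k, j}")
    case True
    then consider "p \<in> K" | "p \<in> J" using swapped by blast
    then show ?thesis
      using cls_K cls_J swapped_colors \<open>1 \<le> k\<close> \<open>1 \<le> j\<close> unfolding K_def J_def by cases auto
  next
    case False
    then show ?thesis using that others[of "fst p" "snd p"] cls_other[of p] by (cases p) auto
  qed
  show "case_prod col p \<noteq> case_prod col q"
    if "p \<in> M \<times> UNIV" "q \<in> M \<times> UNIV" "p \<noteq> q" "cls p = cls q" for p q
  proof (cases "fst p \<in> {k, j} \<and> fst q \<in> {k, j}")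
    case True
    then have "p \<in> K \<and> q \<in> K \<or> p \<in> J \<and> q \<in> J"
      using swapped cls_K cls_J \<open>cls p = cls q\<close> \<open>k \<noteq> j\<close> by (metis UnE)
    then show ?thesis
      using swapped_distinct \<open>p \<noteq> q\<close> unfolding K_def J_def by auto
  next
    case False
    have in_kj: "cls x \<in> {k, j}" if "fst x \<in> {k, j}" for x
      using swapped[OF that] cls_K cls_J by blast
    have "fst p \<notin> {k, j} \<and> fst q \<notin> {k, j}"
      using False in_kj[of p] in_kj[of q] cls_other[of p] cls_other[of q] \<open>cls p = cls q\<close>
      by auto
    then have "fst p = fst q \<and> fst p \<notin> {k, j}"
      using cls_other[of p] cls_other[of q] \<open>cls p = cls q\<close> by auto
    then show ?thesis using that others[of "fst p"] by (cases p; cases q; cases "snd p") auto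
  qed
qed

definition partner :: "nat \<Rightarrow> nat" where
  "partner k = (if k = 1 then 2 else 1)"

lemma partner_neq [simp]: "partner k \<noteq> k" "k \<noteq> partner k"
  by (simp_all add: partner_def)

definition block_base :: "nat \<Rightarrow> (nat \<Rightarrow> int) \<Rightarrow> nat \<Rightarrow> int" where
  "block_base j g = g(j := 2 * (g j div 2))"

lemma block_base_even: "even (g j) \<Longrightarrow> block_base j g = g"
  by (auto simp: block_base_def fun_eq_iff elim!: evenE)

lemma block_base_odd: "odd (g j) \<Longrightarrow> block_base j g = shift j (-1) g"
  by (auto simp: block_base_def shift_def fun_eq_iff elim!: oddE)

lemma edge_start_even_eq_block_base: "edge_start g j (even (g j)) = block_base j g"
  by (simp add: edge_start_def block_base_even block_base_odd)

lemma edge_start_odd_odd: "odd (edge_start g j (odd (g j)) j)"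
  by (simp add: edge_start_def)

definition paired :: "(int \<Rightarrow> bool) \<Rightarrow> int \<Rightarrow> bool" where
  "paired f t \<longleftrightarrow> f t \<and> (f (t - 1) \<or> f (t + 1))"

definition smoothed :: "(int \<Rightarrow> bool) \<Rightarrow> int \<Rightarrow> bool" where
  "smoothed f t \<longleftrightarrow> paired f t \<or> (paired f (t - 1) \<and> paired f (t + 1))"

lemma smoothed_change:
  "smoothed f t \<noteq> smoothed f (t + 1) \<Longrightarrow>
    f t \<noteq> f (t + 1) \<and> smoothed f (t - 1) = smoothed f t \<and> smoothed f (t + 1) = smoothed f (t + 2)"
  unfolding smoothed_def paired_def by (auto simp: algebra_simps)

lemma smoothed_if_all: "f (t - 1) \<Longrightarrow> f t \<Longrightarrow> f (t + 1) \<Longrightarrow> smoothed f t"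
  unfolding smoothed_def paired_def by auto

lemma not_smoothed_if_none: "\<not> f (t - 1) \<Longrightarrow> \<not> f t \<Longrightarrow> \<not> f (t + 1) \<Longrightarrow> \<not> smoothed f t"
  unfolding smoothed_def paired_def by auto

lemma smoothed_translate: "smoothed (\<lambda>t. f (s + t)) u = smoothed f (s + u)"
  unfolding smoothed_def paired_def by (simp add: algebra_simps)

section \<open>Interpolating between two protocols on the grid\<close>

text \<open>\<open>dist\<close> stands for the capped distance from \<open>U\<close> and \<open>offset\<close> for the coordinates of \<open>x1\<close>.\<close>
locale protocol_interpolation =
  fixes d :: nat and dist :: "(nat \<Rightarrow> int) \<Rightarrow> nat" and offset :: "nat \<Rightarrow> int"
  assumes two_le_d: "2 \<le> d"
    and dist_shift_le: "m \<in> {1..d} \<Longrightarrow> dist (shift m 1 g) \<le> dist g + 1"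
    and dist_le_shift: "m \<in> {1..d} \<Longrightarrow> dist g \<le> dist (shift m 1 g) + 1"
begin

definition block_dist :: "nat \<Rightarrow> (nat \<Rightarrow> int) \<Rightarrow> nat" where
  "block_dist k g =
    min (dist (block_base (partner k) g)) (dist (shift (partner k) 1 (block_base (partner k) g)))"

definition near_on_line :: "nat \<Rightarrow> (nat \<Rightarrow> int) \<Rightarrow> int \<Rightarrow> bool" where
  "near_on_line k g t \<longleftrightarrow> block_dist k (shift k t g) \<le> 4 * k - 2"

definition near :: "nat \<Rightarrow> (nat \<Rightarrow> int) \<Rightarrow> bool" where
  "near k g \<longleftrightarrow> smoothed (near_on_line k g) 0"

definition flip_edge :: "nat \<Rightarrow> (nat \<Rightarrow> int) \<Rightarrow> bool" where
  "flip_edge k g \<longleftrightarrow> odd (offset k) \<and> near k g \<noteq> near k (shift k 1 g)"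

definition at_flip :: "nat \<Rightarrow> (nat \<Rightarrow> int) \<Rightarrow> bool" where
  "at_flip k g \<longleftrightarrow> flip_edge k g \<or> flip_edge k (shift k (-1) g)"

definition nominal_color :: "nat \<Rightarrow> (nat \<Rightarrow> int) \<Rightarrow> nat" where
  "nominal_color k g = protocol_color (if near k g then (\<lambda>_. 0) else offset) k g"

definition active_dir :: "(nat \<Rightarrow> int) \<Rightarrow> nat" where
  "active_dir g = (dist g + 2) div 4"

definition swap_color :: "nat \<Rightarrow> (nat \<Rightarrow> int) \<Rightarrow> nat" where
  "swap_color k g =
    (if flip_edge k g then nominal_color k (shift k 1 g) else nominal_color k (shift k (-2) g))"

text \<open>A flip edge of direction \<open>m\<close> takes the nominal colour of the partner edge inside the block
  at its start; that partner edge (second case, \<open>k\<close> the active direction) takes instead the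
  colour of the \<open>k\<close>-edge beyond the flip.\<close>
definition color :: "(nat \<Rightarrow> int) \<Rightarrow> nat \<Rightarrow> nat" where
  "color g m =
    (if flip_edge m g then nominal_color (partner m) (block_base (partner m) g)
     else if even (g m) \<and> active_dir g \<in> {1..d} \<and> partner (active_dir g) = m
       \<and> at_flip (active_dir g) g
     then swap_color (active_dir g) g
     else nominal_color m g)"

definition half_edge_color :: "(nat \<Rightarrow> int) \<Rightarrow> nat \<Rightarrow> bool \<Rightarrow> nat" where
  "half_edge_color g m s = color (edge_start g m s) m"

definition in_band :: "nat \<Rightarrow> (nat \<Rightarrow> int) \<Rightarrow> bool" where
  "in_band k g \<longleftrightarrow> 4 * k - 3 \<le> dist g \<and> dist g \<le> 4 * k + 1"

lemma partner_in_range: "k \<in> {1..d} \<Longrightarrow> partner k \<in> {1..d}"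
  using two_le_d by (auto simp: partner_def)

lemma dist_shift_neg:
  "m \<in> {1..d} \<Longrightarrow> dist (shift m (-1) g) \<le> dist g + 1 \<and> dist g \<le> dist (shift m (-1) g) + 1"
  using dist_shift_le[of m "shift m (-1) g"] dist_le_shift[of m "shift m (-1) g"] by simp

lemma dist_block_base:
  "j \<in> {1..d} \<Longrightarrow> dist (block_base j g) \<le> dist g + 1 \<and> dist g \<le> dist (block_base j g) + 1"
  using dist_shift_neg[of j g] by (cases "even (g j)") (auto simp: block_base_even block_base_odd)

lemma block_dist_bounds: "k \<in> {1..d} \<Longrightarrow> block_dist k g \<le> dist g \<and> dist g \<le> block_dist k g + 1"
  using dist_le_shift[OF partner_in_range, of k g] dist_shift_neg[OF partner_in_range, of k g]
  by (cases "even (g (partner k))") (auto simp: block_dist_def block_base_even block_base_odd)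

lemma block_dist_shift:
  assumes "k \<in> {1..d}"
  shows "block_dist k (shift k 1 g) \<le> block_dist k g + 1 \<and>
    block_dist k g \<le> block_dist k (shift k 1 g) + 1"
proof -
  let ?j = "partner k" and ?b = "block_base (partner k) g"
  have base: "block_base ?j (shift k 1 g) = shift k 1 ?b"
    by (simp add: block_base_def shift_fun_upd)
  have swap: "shift ?j 1 (shift k 1 ?b) = shift k 1 (shift ?j 1 ?b)"
    by (simp add: shift_commute)
  show ?thesis
    unfolding block_dist_def base swap
    using dist_shift_le[OF assms, of ?b] dist_le_shift[OF assms, of ?b]
      dist_shift_le[OF assms, of "shift ?j 1 ?b"] dist_le_shift[OF assms, of "shift ?j 1 ?b"]
    by linarith
qed

lemma block_dist_shift_neg:
  "k \<in> {1..d} \<Longrightarrow>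
    block_dist k (shift k (-1) g) \<le> block_dist k g + 1 \<and>
    block_dist k g \<le> block_dist k (shift k (-1) g) + 1"
  using block_dist_shift[of k "shift k (-1) g"] by simp

lemma near_on_line_shift: "near_on_line k (shift k s g) = (\<lambda>t. near_on_line k g (s + t))"
  by (simp add: near_on_line_def fun_eq_iff add.commute)

lemma near_shift: "near k (shift k s g) = smoothed (near_on_line k g) s"
  unfolding near_def near_on_line_shift using smoothed_translate[of "near_on_line k g" s 0] by simp

lemma flip_edge_shift:
  "flip_edge k (shift k s g) \<longleftrightarrow>
    odd (offset k) \<and> smoothed (near_on_line k g) s \<noteq> smoothed (near_on_line k g) (s + 1)"
  by (simp add: flip_edge_def near_shift add.commute)

lemma flip_edge_iff:
  "flip_edge k g \<longleftrightarrow> odd (offset k) \<and> smoothed (near_on_line k g) 0 \<noteq> smoothed (near_on_line k g) 1"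
  using flip_edge_shift[of k 0 g] by simp

lemma at_flip_iff:
  "at_flip k g \<longleftrightarrow> odd (offset k) \<and>
    (smoothed (near_on_line k g) (- 1) \<noteq> smoothed (near_on_line k g) 0 \<or>
     smoothed (near_on_line k g) 0 \<noteq> smoothed (near_on_line k g) 1)"
  using flip_edge_iff[of k g] flip_edge_shift[of k "- 1" g] by (auto simp: at_flip_def)

lemma flip_edge_isolated:
  assumes "flip_edge k g"
  shows "\<not> flip_edge k (shift k (-1) g) \<and> \<not> flip_edge k (shift k 1 g)"
proof -
  have "smoothed (near_on_line k g) 0 \<noteq> smoothed (near_on_line k g) (0 + 1)"
    using assms flip_edge_iff by simp
  from smoothed_change[OF this] show ?thesis
    using flip_edge_shift[of k "- 1" g] flip_edge_shift[of k 1 g] by simp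
qed

text \<open>Since \<open>block_dist k\<close> only depends on the block of the partner coordinate, so do all the
  notions built on it: the flip edges of direction \<open>k\<close> come in parallel pairs.\<close>
lemma near_on_line_update_partner:
  assumes "v div 2 = g (partner k) div 2"
  shows "near_on_line k (g(partner k := v)) = near_on_line k g"
proof -
  have "block_dist k (shift k t (g(partner k := v))) = block_dist k (shift k t g)" for t
  proof -
    have "shift k t (g(partner k := v)) = (shift k t g)(partner k := v)"
      by (simp add: shift_fun_upd)
    moreover have "block_base (partner k) ((shift k t g)(partner k := v)) =
        block_base (partner k) (shift k t g)"
      using assms by (simp add: block_base_def)
    ultimately show ?thesis by (simp add: block_dist_def)
  qed
  then show ?thesis by (simp add: near_on_line_def fun_eq_iff)
qed

lemma flip_edge_update_partner:
  "v div 2 = g (partner k) div 2 \<Longrightarrow> flip_edge k (g(partner k := v)) = flip_edge k g"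
  by (simp add: flip_edge_iff near_on_line_update_partner)

lemma at_flip_update_partner:
  "v div 2 = g (partner k) div 2 \<Longrightarrow> at_flip k (g(partner k := v)) = at_flip k g"
  by (simp add: at_flip_iff near_on_line_update_partner)

lemma nominal_color_update_partner:
  assumes "v div 2 = g (partner k) div 2"
  shows "nominal_color k (g(partner k := v)) = nominal_color k g"
  using assms
  by (simp add: nominal_color_def near_def near_on_line_update_partner protocol_color_def)

lemma swap_color_update_partner:
  assumes "v div 2 = g (partner k) div 2"
  shows "swap_color k (g(partner k := v)) = swap_color k g"
proof -
  have "nominal_color k (shift k t (g(partner k := v))) = nominal_color k (shift k t g)" for t
    using assms nominal_color_update_partner[of v "shift k t g" k] by (simp add: shift_fun_upd)
  then show ?thesis using assms by (simp add: swap_color_def flip_edge_update_partner)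
qed

lemma flip_edge_dist:
  assumes k: "k \<in> {1..d}" and "flip_edge k g"
  shows "4 * k - 2 \<le> dist g \<and> dist g \<le> 4 * k \<and>
    4 * k - 2 \<le> dist (shift k 1 g) \<and> dist (shift k 1 g) \<le> 4 * k"
proof -
  have "smoothed (near_on_line k g) 0 \<noteq> smoothed (near_on_line k g) (0 + 1)"
    using assms flip_edge_iff by simp
  then have "near_on_line k g 0 \<noteq> near_on_line k g 1"
    using smoothed_change[of "near_on_line k g" 0] by simp
  then have "(block_dist k g \<le> 4 * k - 2) \<noteq> (block_dist k (shift k 1 g) \<le> 4 * k - 2)"
    by (simp add: near_on_line_def)
  then consider "block_dist k g \<le> 4 * k - 2" "4 * k - 2 < block_dist k (shift k 1 g)"
    | "4 * k - 2 < block_dist k g" "block_dist k (shift k 1 g) \<le> 4 * k - 2"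
    by linarith
  then show ?thesis
    using block_dist_shift[OF k, of g] block_dist_bounds[OF k, of g]
      block_dist_bounds[OF k, of "shift k 1 g"] k by cases auto
qed

lemma at_flip_dist: "k \<in> {1..d} \<Longrightarrow> at_flip k g \<Longrightarrow> 4 * k - 2 \<le> dist g \<and> dist g \<le> 4 * k"
  using flip_edge_dist[of k g] flip_edge_dist[of k "shift k (-1) g"] by (auto simp: at_flip_def)

lemma at_flip_in_band:
  assumes k: "k \<in> {1..d}" and "at_flip k g" and m: "m \<in> {1..d}"
  shows "in_band k g \<and> in_band k (shift m 1 g) \<and> in_band k (shift m (-1) g) \<and>
    in_band k (block_base m g)"
  using at_flip_dist[OF k \<open>at_flip k g\<close>] dist_shift_le[OF m, of g] dist_le_shift[OF m, of g]
    dist_shift_neg[OF m, of g] dist_block_base[OF m, of g] k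
  unfolding in_band_def by auto

lemma at_flip_unique: "k \<in> {1..d} \<Longrightarrow> m \<in> {1..d} \<Longrightarrow> in_band k g \<Longrightarrow> at_flip m g \<Longrightarrow> m = k"
  using at_flip_dist[of m g] unfolding in_band_def by auto

lemma active_dir_at_flip: "k \<in> {1..d} \<Longrightarrow> at_flip k g \<Longrightarrow> active_dir g = k"
  using at_flip_dist[of k g] unfolding active_dir_def by (auto intro!: div_nat_eqI)

lemma near_if_close:
  assumes j: "j \<in> {1..d}" and "dist g + 3 \<le> 4 * j"
  shows "near j g"
  unfolding near_def
proof (rule smoothed_if_all)
  show "near_on_line j g (0 - 1)" "near_on_line j g 0" "near_on_line j g (0 + 1)"
    using assms block_dist_shift_neg[OF j, of g] block_dist_shift[OF j, of g]
      block_dist_bounds[OF j, of g]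
    by (auto simp: near_on_line_def)
qed

lemma not_near_if_far:
  assumes j: "j \<in> {1..d}" and "4 * j + 1 \<le> dist g"
  shows "\<not> near j g"
  unfolding near_def
proof (rule not_smoothed_if_none)
  show "\<not> near_on_line j g (0 - 1)" "\<not> near_on_line j g 0" "\<not> near_on_line j g (0 + 1)"
    using assms block_dist_shift_neg[OF j, of g] block_dist_shift[OF j, of g]
      block_dist_bounds[OF j, of g]
    by (auto simp: near_on_line_def)
qed

lemma near_in_band:
  assumes "k \<in> {1..d}" and "j \<in> {1..d}" and "j \<noteq> k" and "in_band k g"
  shows "near j g \<longleftrightarrow> k < j"
proof (cases "k < j")
  case True
  then show ?thesis using assms near_if_close[of j g] unfolding in_band_def by auto
next
  case False
  with assms have "4 * j + 1 \<le> dist g" unfolding in_band_def by auto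
  then show ?thesis using False not_near_if_far[OF \<open>j \<in> {1..d}\<close>] by simp
qed

lemma nominal_color_class: "nominal_color m g \<in> {2 * m - 1, 2 * m}"
  unfolding nominal_color_def by (rule protocol_color_class)

lemma swap_color_class: "swap_color k g \<in> {2 * k - 1, 2 * k}"
  using nominal_color_class unfolding swap_color_def by simp

lemma color_eq_nominal:
  assumes "\<not> flip_edge m x"
    and "active_dir x \<in> {1..d} \<Longrightarrow> at_flip (active_dir x) x \<Longrightarrow> partner (active_dir x) = m \<Longrightarrow> odd (x m)"
  shows "color x m = nominal_color m x"
  using assms unfolding color_def by auto

lemma nominal_color_neq_of_parity:
  "1 \<le> j \<Longrightarrow> near j x = near j y \<Longrightarrow> odd (x j - y j) \<Longrightarrow> nominal_color j x \<noteq> nominal_color j y"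
  by (auto simp: nominal_color_def protocol_color_def even_diff even_add)

lemma nominal_color_shift_neq:
  assumes "1 \<le> m" and "\<not> flip_edge m x"
  shows "nominal_color m (shift m 1 x) \<noteq> nominal_color m x"
proof (cases "odd (offset m)")
  case True
  then show ?thesis
    using assms nominal_color_neq_of_parity[of m "shift m 1 x" x] by (simp add: flip_edge_def)
next
  case False
  then show ?thesis
    using assms by (auto simp: nominal_color_def protocol_color_def even_diff even_add)
qed

lemma nominal_color_across_flip:
  assumes "1 \<le> k" and "flip_edge k x"
  shows "nominal_color k (shift k (-1) x) \<noteq> nominal_color k (shift k 1 x)"
proof -
  have "near k (shift k (-1) x) = near k x"
    using flip_edge_isolated[OF assms(2)] assms(2) by (simp add: flip_edge_def)
  then show ?thesis
    using assms
    by (auto simp: flip_edge_def nominal_color_def protocol_color_def even_diff even_add)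
qed

lemma nominal_color_partner_neq:
  assumes k: "k \<in> {1..d}" and "in_band k x" and "in_band k y"
    and "odd (x (partner k) - y (partner k))"
  shows "nominal_color (partner k) x \<noteq> nominal_color (partner k) y"
  using assms near_in_band[OF k partner_in_range[OF k]] partner_in_range[OF k]
  by (intro nominal_color_neq_of_parity) auto

lemma half_edge_colors_plain:
  assumes m: "m \<in> {1..d}" and "\<not> at_flip m g"
    and no_swap: "\<And>k. k \<in> {1..d} \<Longrightarrow> at_flip k g \<Longrightarrow> partner k \<noteq> m"
  shows "half_edge_color g m True \<in> {2 * m - 1, 2 * m} \<and>
    half_edge_color g m False \<in> {2 * m - 1, 2 * m} \<and>
    half_edge_color g m True \<noteq> half_edge_color g m False"
proof -
  define x where "x = shift m (-1) g"
  have g: "g = shift m 1 x" by (simp add: x_def)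
  have not_flip: "\<not> flip_edge m g" "\<not> flip_edge m x"
    using \<open>\<not> at_flip m g\<close> by (auto simp: at_flip_def x_def)
  have at_g: "color g m = nominal_color m g"
    using not_flip no_swap by (intro color_eq_nominal) auto
  have at_x: "color x m = nominal_color m x"
  proof (rule color_eq_nominal[OF not_flip(2)])
    assume k: "active_dir x \<in> {1..d}" "at_flip (active_dir x) x" "partner (active_dir x) = m"
    show "odd (x m)"
    proof
      assume "even (x m)"
      then have "(x m + 1) div 2 = x (partner (active_dir x)) div 2"
        using k(3) by (auto elim!: evenE)
      then have "at_flip (active_dir x) (x(partner (active_dir x) := x m + 1))"
        using at_flip_update_partner k(2) by blast
      moreover have "x(partner (active_dir x) := x m + 1) = g"
        using k(3) g by (simp add: shift_def)
      ultimately show False using no_swap k(1,3) by blast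
    qed
  qed
  have "nominal_color m g \<noteq> nominal_color m x"
    using nominal_color_shift_neq[of m x] m not_flip(2) g by simp
  then show ?thesis
    using at_g at_x nominal_color_class
    unfolding half_edge_color_def edge_start_def x_def[symmetric] by simp
qed

lemma color_block_base_partner:
  assumes k: "k \<in> {1..d}" and "at_flip k g"
  shows "color (block_base (partner k) g) (partner k) = swap_color k g"
proof -
  let ?j = "partner k" and ?b = "block_base (partner k) g"
  have same_block: "2 * (g ?j div 2) div 2 = g ?j div 2" by simp
  have b: "?b = g(?j := 2 * (g ?j div 2))" by (simp add: block_base_def)
  have "at_flip k ?b"
    using at_flip_update_partner[of "2 * (g ?j div 2)" g k, OF same_block] \<open>at_flip k g\<close> b by simp
  moreover have "\<not> flip_edge ?j ?b"
  proof
    assume "flip_edge ?j ?b"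
    then have "at_flip ?j ?b" by (simp add: at_flip_def)
    then show False
      using at_flip_unique[OF k partner_in_range[OF k]]
        at_flip_in_band[OF k \<open>at_flip k g\<close> partner_in_range[OF k]]
      by auto
  qed
  moreover have "swap_color k ?b = swap_color k g"
    using swap_color_update_partner[of "2 * (g ?j div 2)" g k, OF same_block] b by simp
  ultimately show ?thesis
    using active_dir_at_flip[OF k] k unfolding color_def by (simp add: block_base_def)
qed

lemma color_partner_odd:
  assumes k: "k \<in> {1..d}" and "in_band k x" and "odd (x (partner k))"
  shows "color x (partner k) = nominal_color (partner k) x"
proof (rule color_eq_nominal)
  show "\<not> flip_edge (partner k) x"
    using at_flip_unique[OF k partner_in_range[OF k] \<open>in_band k x\<close>] by (auto simp: at_flip_def)
qed (use assms in simp)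

lemma swap_color_neq:
  assumes k: "k \<in> {1..d}" and "at_flip k g"
  shows "swap_color k g \<noteq> nominal_color k (edge_start g k (\<not> flip_edge k g))"
proof (cases "flip_edge k g")
  case True
  then show ?thesis
    using nominal_color_across_flip[of k g] k by (simp add: swap_color_def edge_start_def)
next
  case False
  define f where "f = shift k (-1) g"
  have "flip_edge k f" using False \<open>at_flip k g\<close> by (simp add: at_flip_def f_def)
  moreover have "g = shift k 1 f" "shift k (-2) g = shift k (-1) f" by (simp_all add: f_def)
  ultimately show ?thesis
    using nominal_color_across_flip[of k f] k False by (simp add: swap_color_def edge_start_def)
qed

lemma half_edge_colors_at_flip:
  assumes k: "k \<in> {1..d}" and flip: "at_flip k g"
  shows "\<exists>sk sj.
    half_edge_color g k sk \<in> {2 * k - 1, 2 * k} \<and>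
    half_edge_color g k (\<not> sk) \<in> {2 * partner k - 1, 2 * partner k} \<and>
    half_edge_color g (partner k) sj \<in> {2 * k - 1, 2 * k} \<and>
    half_edge_color g (partner k) (\<not> sj) \<in> {2 * partner k - 1, 2 * partner k} \<and>
    half_edge_color g k sk \<noteq> half_edge_color g (partner k) sj \<and>
    half_edge_color g k (\<not> sk) \<noteq> half_edge_color g (partner k) (\<not> sj)"
proof -
  let ?j = "partner k"
  have j: "?j \<in> {1..d}" by (rule partner_in_range[OF k])
  define f where "f = edge_start g k (flip_edge k g)"
  define other where "other = edge_start g k (\<not> flip_edge k g)"
  define outer where "outer = edge_start g ?j (odd (g ?j))"
  have flip_f: "flip_edge k f"
    using flip by (auto simp: f_def edge_start_def at_flip_def)
  have other: "other = shift k (-1) f \<or> other = shift k 1 f"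
    by (auto simp: other_def f_def edge_start_def)
  have band: "in_band k other" "in_band k outer" "in_band k (block_base ?j f)"
    using at_flip_in_band[OF k flip k] at_flip_in_band[OF k flip j]
      at_flip_in_band[OF k _ j, of f] flip_f
    by (auto simp: other_def outer_def edge_start_def at_flip_def)
  have k_flip: "half_edge_color g k (flip_edge k g) = nominal_color ?j (block_base ?j f)"
    using flip_f by (simp add: half_edge_color_def f_def[symmetric] color_def)
  have "color other k = nominal_color k other"
  proof (rule color_eq_nominal)
    show "\<not> flip_edge k other" using other flip_edge_isolated[OF flip_f] by auto
    show "odd (other k)"
      if "active_dir other \<in> {1..d}" and "at_flip (active_dir other) other"
        and "partner (active_dir other) = k"
      using that at_flip_unique[OF k _ band(1)] by auto
  qed
  then have k_other: "half_edge_color g k (\<not> flip_edge k g) = nominal_color k other"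
    by (simp add: half_edge_color_def other_def)
  have j_inner: "half_edge_color g ?j (even (g ?j)) = swap_color k g"
    using color_block_base_partner[OF k flip]
    by (simp add: half_edge_color_def edge_start_even_eq_block_base)
  have j_outer: "half_edge_color g ?j (odd (g ?j)) = nominal_color ?j outer"
    using color_partner_odd[OF k band(2)] edge_start_odd_odd[of g ?j]
    by (simp add: half_edge_color_def outer_def)
  have "odd (block_base ?j f ?j - outer ?j)"
    using edge_start_odd_odd[of g ?j] by (simp add: block_base_def f_def outer_def edge_start_def)
  then have "nominal_color ?j (block_base ?j f) \<noteq> nominal_color ?j outer"
    using nominal_color_partner_neq[OF k band(3) band(2)] by simp
  then show ?thesis
    using k_flip k_other j_inner j_outer swap_color_neq[OF k flip] swap_color_class
      nominal_color_class other_def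
    by (intro exI[of _ "\<not> flip_edge k g"] exI[of _ "even (g ?j)"]) auto
qed

theorem half_edge_colors_inj: "inj_on (\<lambda>(m, s). half_edge_color g m s) ({1..d} \<times> UNIV)"
proof (cases "\<exists>k\<in>{1..d}. at_flip k g")
  case False
  show ?thesis
  proof (rule inj_on_by_color_class[where cls = fst])
    show "1 \<le> fst p \<and> (case p of (m, s) \<Rightarrow> half_edge_color g m s) \<in> {2 * fst p - 1, 2 * fst p}"
      if "p \<in> {1..d} \<times> UNIV" for p
      using that half_edge_colors_plain[of "fst p" g] False by (cases p; cases "snd p") auto
    show "(case p of (m, s) \<Rightarrow> half_edge_color g m s) \<noteq> (case q of (m, s) \<Rightarrow> half_edge_color g m s)"
      if "p \<in> {1..d} \<times> UNIV" "q \<in> {1..d} \<times> UNIV" "p \<noteq> q" "fst p = fst q" for p q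
      using that half_edge_colors_plain[of "fst p" g] False
      by (cases p; cases q; cases "snd p"; cases "snd q") auto
  qed
next
  case True
  then obtain k where k: "k \<in> {1..d}" and flip: "at_flip k g" by blast
  have band: "in_band k g" using at_flip_in_band[OF k flip k] by simp
  have plain: "1 \<le> m \<and> half_edge_color g m s \<in> {2 * m - 1, 2 * m}
      \<and> half_edge_color g m True \<noteq> half_edge_color g m False"
    if "m \<in> {1..d}" "m \<noteq> k" "m \<noteq> partner k" for m s
    using half_edge_colors_plain[of m g] that at_flip_unique[OF k _ band]
    by (cases s) auto
  obtain sk sj where
    "half_edge_color g k sk \<in> {2 * k - 1, 2 * k}"
    "half_edge_color g k (\<not> sk) \<in> {2 * partner k - 1, 2 * partner k}"
    "half_edge_color g (partner k) sj \<in> {2 * k - 1, 2 * k}"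
    "half_edge_color g (partner k) (\<not> sj) \<in> {2 * partner k - 1, 2 * partner k}"
    "half_edge_color g k sk \<noteq> half_edge_color g (partner k) sj"
    "half_edge_color g k (\<not> sk) \<noteq> half_edge_color g (partner k) (\<not> sj)"
    using half_edge_colors_at_flip[OF k flip] by blast
  with plain k partner_in_range[OF k] show ?thesis
    by (intro inj_on_colors_swapped_pair[where k = k and j = "partner k"]) auto
qed

theorem color_range: "m \<in> {1..d} \<Longrightarrow> color g m \<in> {1..2 * d}"
proof -
  have in_range: "nominal_color q x \<in> {1..2 * d}" if "q \<in> {1..d}" for q x
    using nominal_color_class[of q x] that by auto
  assume "m \<in> {1..d}"
  then show ?thesis
    using in_range partner_in_range unfolding color_def swap_color_def by auto
qed

theorem color_near_source:
  assumes m: "m \<in> {1..d}" and "dist g = 0 \<or> dist (shift m 1 g) = 0"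
  shows "color g m = protocol_color (\<lambda>_. 0) m g"
proof -
  have "dist g \<le> 1" "dist (shift m 1 g) \<le> 1"
    using assms dist_shift_le[OF m, of g] dist_le_shift[OF m, of g] by auto
  then have "near m g" "near m (shift m 1 g)" "active_dir g = 0"
    using near_if_close[OF m] m by (auto simp: active_dir_def)
  then show ?thesis
    by (simp add: color_def flip_edge_def nominal_color_def)
qed

theorem color_far_source:
  assumes m: "m \<in> {1..d}" and "4 * d + 2 \<le> dist g \<or> 4 * d + 2 \<le> dist (shift m 1 g)"
  shows "color g m = protocol_color offset m g"
proof -
  have far: "4 * d + 1 \<le> dist g" "4 * d + 1 \<le> dist (shift m 1 g)"
    using assms dist_shift_le[OF m, of g] dist_le_shift[OF m, of g] by auto
  then have "\<not> near m g" "\<not> near m (shift m 1 g)"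
    using not_near_if_far[OF m] m by auto
  moreover have "\<not> at_flip k g" if "k \<in> {1..d}" for k
    using at_flip_dist[of k g] far that by auto
  ultimately have "color g m = nominal_color m g"
    by (intro color_eq_nominal) (auto simp: flip_edge_def)
  with \<open>\<not> near m g\<close> show ?thesis
    by (simp add: nominal_color_def)
qed

end

section \<open>Free orbits\<close>

lemma Zd_add: "g \<in> Zd d \<Longrightarrow> h \<in> Zd d \<Longrightarrow> (\<lambda>j. g j + h j) \<in> Zd d"
  by (auto simp: Zd_def) (metis add.right_neutral)+

lemma Zd_diff: "g \<in> Zd d \<Longrightarrow> h \<in> Zd d \<Longrightarrow> (\<lambda>j. g j - h j) \<in> Zd d"
  by (auto simp: Zd_def) (metis diff_0 diff_self neg_equal_0_iff_equal)+

lemma Zd_shift: "m \<in> {1..d} \<Longrightarrow> g \<in> Zd d \<Longrightarrow> shift m t g \<in> Zd d"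
  by (auto simp: Zd_def shift_def)

lemma zero_in_Zd: "(\<lambda>_. 0) \<in> Zd d"
  by (simp add: Zd_def)

lemma unitvec_in_Zd: "m \<in> {1..d} \<Longrightarrow> unitvec m \<in> Zd d"
  by (auto simp: Zd_def unitvec_def)

lemma neg_unitvec_in_Zd: "m \<in> {1..d} \<Longrightarrow> (\<lambda>j. - unitvec m j) \<in> Zd d"
  by (auto simp: Zd_def unitvec_def)

lemma unitvec_add: "(\<lambda>j. unitvec m j + h j) = shift m 1 h"
  by (auto simp: unitvec_def shift_def fun_eq_iff)

lemma add_neg_unitvec: "(\<lambda>j. h j - unitvec m j) = shift m (-1) h"
  by (auto simp: unitvec_def shift_def fun_eq_iff)

definition restrict_Zd :: "nat \<Rightarrow> (nat \<Rightarrow> int) \<Rightarrow> nat \<Rightarrow> int" where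
  "restrict_Zd d g = (\<lambda>i. if i \<in> {1..d} then g i else 0)"

lemma restrict_Zd_in: "restrict_Zd d g \<in> Zd d"
  by (auto simp: restrict_Zd_def Zd_def)

lemma restrict_Zd_id: "g \<in> Zd d \<Longrightarrow> restrict_Zd d g = g"
  by (auto simp: restrict_Zd_def Zd_def fun_eq_iff)

lemma restrict_Zd_shift: "m \<in> {1..d} \<Longrightarrow> restrict_Zd d (shift m t g) = shift m t (restrict_Zd d g)"
  by (auto simp: restrict_Zd_def shift_def fun_eq_iff)

lemma orbit_subset: "is_action d X a \<Longrightarrow> y \<in> X \<Longrightarrow> orbit d a y \<subseteq> X"
  by (auto simp: orbit_def is_action_def)

lemma sedges_mono: "A \<subseteq> B \<Longrightarrow> sedges d a A \<subseteq> sedges d a B"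
  by (auto simp: sedges_def)

lemma follows_protocol_agree:
  assumes "follows_protocol d a A c p W" and "follows_protocol d a B c' p W"
    and "e \<in> sedges d a A" and "e \<in> sedges d a B" and "fst e \<in> W"
  shows "c' e = c e"
  using assms unfolding follows_protocol_def by (cases e) fastforce

definition trunc_dist :: "('x \<times> 'x) set \<Rightarrow> 'x set \<Rightarrow> nat \<Rightarrow> 'x \<Rightarrow> nat" where
  "trunc_dist R U r z = (LEAST n. n = r \<or> (\<exists>u\<in>U. (u, z) \<in> R ^^ n))"

lemma trunc_dist_le: "trunc_dist R U r z \<le> r"
  unfolding trunc_dist_def by (rule Least_le) simp

lemma trunc_dist_path: "trunc_dist R U r z = r \<or> (\<exists>u\<in>U. (u, z) \<in> R ^^ trunc_dist R U r z)"
  unfolding trunc_dist_def by (rule LeastI[of _ r]) simp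

lemma trunc_dist_step:
  assumes "(z, z') \<in> R"
  shows "trunc_dist R U r z' \<le> trunc_dist R U r z + 1"
proof (cases "trunc_dist R U r z = r")
  case True
  then show ?thesis using trunc_dist_le[of R U r z'] by simp
next
  case False
  then obtain u where "u \<in> U" "(u, z) \<in> R ^^ trunc_dist R U r z"
    using trunc_dist_path[of R U r z] by auto
  then have "(u, z') \<in> R ^^ Suc (trunc_dist R U r z)"
    using assms by auto
  then show ?thesis
    unfolding trunc_dist_def using \<open>u \<in> U\<close> by (intro Least_le) auto
qed

lemma trunc_dist_source: "u \<in> U \<Longrightarrow> trunc_dist R U r u = 0"
  unfolding trunc_dist_def by (rule Least_eq_0) auto

lemma trunc_dist_far:
  assumes "\<forall>u\<in>U. \<forall>n<r. (u, z) \<notin> R ^^ n"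
  shows "trunc_dist R U r z = r"
proof (rule ccontr)
  assume "trunc_dist R U r z \<noteq> r"
  then have "trunc_dist R U r z < r" using trunc_dist_le[of R U r z] by simp
  moreover obtain u where "u \<in> U" "(u, z) \<in> R ^^ trunc_dist R U r z"
    using trunc_dist_path[of R U r z] \<open>trunc_dist R U r z \<noteq> r\<close> by auto
  ultimately show False using assms by blast
qed

locale free_orbit =
  fixes d :: nat and X :: "'x set" and a :: "(nat \<Rightarrow> int) \<Rightarrow> 'x \<Rightarrow> 'x" and x0 :: 'x
  assumes free: "free_action d X a" and base_in: "x0 \<in> X"
begin

definition pos :: "(nat \<Rightarrow> int) \<Rightarrow> 'x" where
  "pos g = a g x0"

lemma action_in: "g \<in> Zd d \<Longrightarrow> x \<in> X \<Longrightarrow> a g x \<in> X"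
  and action_add: "g \<in> Zd d \<Longrightarrow> h \<in> Zd d \<Longrightarrow> x \<in> X \<Longrightarrow> a (\<lambda>j. g j + h j) x = a g (a h x)"
  and action_fixed: "g \<in> Zd d \<Longrightarrow> x \<in> X \<Longrightarrow> a g x = x \<Longrightarrow> g = (\<lambda>_. 0)"
  using free unfolding free_action_def is_action_def by blast+

lemma pos_in: "g \<in> Zd d \<Longrightarrow> pos g \<in> X"
  by (simp add: pos_def action_in base_in)

lemma pos_zero: "pos (\<lambda>_. 0) = x0"
  using free base_in by (simp add: pos_def free_action_def is_action_def)

lemma action_pos: "g \<in> Zd d \<Longrightarrow> h \<in> Zd d \<Longrightarrow> a g (pos h) = pos (\<lambda>j. g j + h j)"
  by (simp add: pos_def action_add base_in)

lemma unitvec_action_pos: "m \<in> {1..d} \<Longrightarrow> h \<in> Zd d \<Longrightarrow> a (unitvec m) (pos h) = pos (shift m 1 h)"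
  by (simp add: action_pos unitvec_in_Zd unitvec_add)

lemma neg_unitvec_action_pos:
  "m \<in> {1..d} \<Longrightarrow> h \<in> Zd d \<Longrightarrow> a (\<lambda>j. - unitvec m j) (pos h) = pos (shift m (-1) h)"
  by (simp add: action_pos neg_unitvec_in_Zd add_neg_unitvec)

lemma pos_inj: "inj_on pos (Zd d)"
proof (rule inj_onI)
  fix g h assume g: "g \<in> Zd d" and h: "h \<in> Zd d" and "pos g = pos h"
  then have "a (\<lambda>j. g j - h j) (pos h) = pos h"
    using action_pos[OF Zd_diff[OF g h] h] by simp
  then have "(\<lambda>j. g j - h j) = (\<lambda>_. 0)"
    using action_fixed[OF Zd_diff[OF g h] pos_in[OF h]] by simp
  then show "g = h" by (simp add: fun_eq_iff)
qed

lemma orbit_eq_pos_image: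
  assumes "y \<in> X" and "x0 \<in> orbit d a y"
  shows "orbit d a y = pos ` Zd d"
proof -
  obtain g0 where g0: "g0 \<in> Zd d" "x0 = a g0 y" using assms(2) by (auto simp: orbit_def)
  have "a g y = pos (\<lambda>j. g j - g0 j)" if "g \<in> Zd d" for g
    using action_add[OF Zd_diff[OF that g0(1)] g0(1) assms(1)] g0(2)[symmetric]
    by (simp add: pos_def)
  moreover have "pos g = a (\<lambda>j. g j + g0 j) y" if "g \<in> Zd d" for g
    using action_add[OF that g0(1) assms(1)] g0(2)[symmetric] by (simp add: pos_def)
  ultimately show ?thesis
    unfolding orbit_def using Zd_diff[OF _ g0(1)] Zd_add[OF _ g0(1)] by blast
qed

lemma coords_pos:
  assumes p: "p \<in> Zd d" and g: "g \<in> Zd d"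
  shows "coords d a (pos p) (pos g) = (\<lambda>i. g i - p i)"
  unfolding coords_def
proof (rule the_equality)
  show "(\<lambda>i. g i - p i) \<in> Zd d \<and> a (\<lambda>i. g i - p i) (pos p) = pos g"
    using Zd_diff[OF g p] action_pos[OF Zd_diff[OF g p] p] by simp
next
  fix h assume h: "h \<in> Zd d \<and> a h (pos p) = pos g"
  then have "pos (\<lambda>j. h j + p j) = pos g" using action_pos[of h p] p by simp
  then have "(\<lambda>j. h j + p j) = g"
    using pos_inj Zd_add[of h d p] h p g by (auto dest: inj_onD)
  then show "h = (\<lambda>i. g i - p i)" by (auto simp: fun_eq_iff algebra_simps)
qed

lemma coords_base: "g \<in> Zd d \<Longrightarrow> coords d a x0 (pos g) = g"
  using coords_pos[OF zero_in_Zd] pos_zero by simp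

lemma schreier_adj_pos:
  assumes m: "m \<in> {1..d}" and h: "h \<in> Zd d"
  shows "(pos h, pos (shift m 1 h)) \<in> schreier_adj d X a \<and>
    (pos (shift m 1 h), pos h) \<in> schreier_adj d X a"
proof -
  have s: "shift m 1 h \<in> Zd d" by (rule Zd_shift[OF m h])
  have "a (\<lambda>j. - unitvec m j) (pos (shift m 1 h)) = pos h"
    using neg_unitvec_action_pos[OF m s] by simp
  then show ?thesis
    using m pos_in[OF h] pos_in[OF s] unitvec_action_pos[OF m h]
    unfolding schreier_adj_def by (auto intro!: bexI[of _ m])
qed

lemma sedges_pos_imageE:
  assumes "e \<in> sedges d a (pos ` Zd d)"
  obtains g i where "g \<in> Zd d" and "i \<in> {1..d}" and "e = (pos g, i)"
  using assms unfolding sedges_def by auto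

lemma sends_pos: "g \<in> Zd d \<Longrightarrow> i \<in> {1..d} \<Longrightarrow> sends a (pos g, i) = pos ` {g, shift i 1 g}"
  by (simp add: sends_def unitvec_action_pos)

lemma edge_coloring_of_grid:
  assumes range: "\<And>g m. m \<in> {1..d} \<Longrightarrow> col g m \<in> {1..k}"
    and inj: "\<And>g. inj_on (\<lambda>(m, s). col (edge_start g m s) m) ({1..d} \<times> UNIV)"
  shows "is_edge_coloring d a (pos ` Zd d) k (\<lambda>e. col (coords d a x0 (fst e)) (snd e))"
  unfolding is_edge_coloring_def
proof (intro conjI ballI impI)
  fix e assume "e \<in> sedges d a (pos ` Zd d)"
  then obtain g i where "g \<in> Zd d" "i \<in> {1..d}" "e = (pos g, i)"
    by (rule sedges_pos_imageE)
  then show "col (coords d a x0 (fst e)) (snd e) \<in> {1..k}"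
    using range coords_base by simp
next
  fix e f assume e: "e \<in> sedges d a (pos ` Zd d)" and f: "f \<in> sedges d a (pos ` Zd d)"
    and ef: "e \<noteq> f \<and> sends a e \<inter> sends a f \<noteq> {}"
  obtain g i where g: "g \<in> Zd d" "i \<in> {1..d}" "e = (pos g, i)"
    using e by (rule sedges_pos_imageE)
  obtain g' i' where g': "g' \<in> Zd d" "i' \<in> {1..d}" "f = (pos g', i')"
    using f by (rule sedges_pos_imageE)
  obtain z where "z \<in> sends a e" "z \<in> sends a f"
    using ef by blast
  then obtain p q where p: "p \<in> {g, shift i 1 g}" and q: "q \<in> {g', shift i' 1 g'}"
    and "pos p = pos q"
    unfolding g(3) g'(3) sends_pos[OF g(1,2)] sends_pos[OF g'(1,2)] by blast
  moreover have "p \<in> Zd d" "q \<in> Zd d"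
    using p q Zd_shift[OF g(2,1)] Zd_shift[OF g'(2,1)] g(1) g'(1) by auto
  ultimately have h: "p \<in> {g, shift i 1 g}" "p \<in> {g', shift i' 1 g'}"
    using inj_onD[OF pos_inj] by auto
  have "(g, i) \<noteq> (g', i')" using ef g(3) g'(3) by auto
  from half_edges_of_shared_vertex[OF h this]
  show "col (coords d a x0 (fst e)) (snd e) \<noteq> col (coords d a x0 (fst f)) (snd f)"
    using inj_onD[OF inj[of p], of "(i, p = g)" "(i', p = g')"] g g' coords_base by auto
qed

lemma follows_protocol_of_grid:
  assumes p: "p \<in> Zd d"
    and agree: "\<And>g m. g \<in> Zd d \<Longrightarrow> m \<in> {1..d} \<Longrightarrow> pos g \<in> W \<or> pos (shift m 1 g) \<in> W \<Longrightarrow>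
      col g m = protocol_color p m g"
  shows "follows_protocol d a (pos ` Zd d) (\<lambda>e. col (coords d a x0 (fst e)) (snd e)) (pos p) W"
  unfolding follows_protocol_def
proof (rule ballI)
  fix e assume "e \<in> sedges d a (pos ` Zd d)"
  then obtain g i where g: "g \<in> Zd d" "i \<in> {1..d}" "e = (pos g, i)"
    by (rule sedges_pos_imageE)
  then show "case e of (x, i) \<Rightarrow> x \<in> W \<or> a (unitvec i) x \<in> W \<longrightarrow>
      col (coords d a x0 (fst (x, i))) (snd (x, i)) =
      (if even (coords d a (pos p) x i) then 2 * i - 1 else 2 * i)"
    using agree[OF g(1,2)] unitvec_action_pos[OF g(2,1)] coords_base coords_pos[OF p g(1)]
    by (simp add: protocol_color_def)
qed

lemma protocol_interpolation_trunc_dist: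
  assumes "2 \<le> d"
  shows "protocol_interpolation d (\<lambda>g. trunc_dist (schreier_adj d X a) U r (pos (restrict_Zd d g)))"
proof
  fix m g assume m: "m \<in> {1..d}"
  let ?h = "restrict_Zd d g"
  have adj: "(pos ?h, pos (shift m 1 ?h)) \<in> schreier_adj d X a"
    "(pos (shift m 1 ?h), pos ?h) \<in> schreier_adj d X a"
    using schreier_adj_pos[OF m restrict_Zd_in] by auto
  show "trunc_dist (schreier_adj d X a) U r (pos (restrict_Zd d (shift m 1 g)))
      \<le> trunc_dist (schreier_adj d X a) U r (pos ?h) + 1"
    "trunc_dist (schreier_adj d X a) U r (pos ?h)
      \<le> trunc_dist (schreier_adj d X a) U r (pos (restrict_Zd d (shift m 1 g))) + 1"
    unfolding restrict_Zd_shift[OF m]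
    by (rule trunc_dist_step[OF adj(1)], rule trunc_dist_step[OF adj(2)])
qed (fact assms)

theorem exists_interpolating_coloring:
  assumes "2 \<le> d" and "p \<in> Zd d" and "path_dist_gt d X a U V (4 * d + 1)"
  shows "\<exists>c'. is_edge_coloring d a (pos ` Zd d) (2 * d) c' \<and>
    follows_protocol d a (pos ` Zd d) c' x0 U \<and> follows_protocol d a (pos ` Zd d) c' (pos p) V"
proof -
  let ?R = "schreier_adj d X a"
  define r where "r = 4 * d + 2"
  define dist where "dist g = trunc_dist ?R U r (pos (restrict_Zd d g))" for g
  interpret protocol_interpolation d dist p
    unfolding dist_def by (rule protocol_interpolation_trunc_dist[OF assms(1)])
  have dist_pos: "dist g = trunc_dist ?R U r (pos g)" if "g \<in> Zd d" for g
    using that by (simp add: dist_def restrict_Zd_id)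
  have far: "trunc_dist ?R U r v = r" if "v \<in> V" for v
    using assms(3) that unfolding r_def
    by (intro trunc_dist_far) (auto simp: path_dist_gt_def less_Suc_eq_le)
  define c' where "c' e = color (coords d a x0 (fst e)) (snd e)" for e
  have "is_edge_coloring d a (pos ` Zd d) (2 * d) c'"
    unfolding c'_def using half_edge_colors_inj color_range
    by (intro edge_coloring_of_grid) (simp_all add: half_edge_color_def)
  moreover have "follows_protocol d a (pos ` Zd d) c' (pos (\<lambda>_. 0)) U"
    unfolding c'_def
  proof (rule follows_protocol_of_grid[OF zero_in_Zd])
    fix g m assume "g \<in> Zd d" and m: "m \<in> {1..d}" and "pos g \<in> U \<or> pos (shift m 1 g) \<in> U"
    then have "dist g = 0 \<or> dist (shift m 1 g) = 0"
      by (auto simp: dist_pos Zd_shift trunc_dist_source)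
    then show "color g m = protocol_color (\<lambda>_. 0) m g" by (rule color_near_source[OF m])
  qed
  moreover have "follows_protocol d a (pos ` Zd d) c' (pos p) V"
    unfolding c'_def
  proof (rule follows_protocol_of_grid[OF assms(2)])
    fix g m assume "g \<in> Zd d" and m: "m \<in> {1..d}" and "pos g \<in> V \<or> pos (shift m 1 g) \<in> V"
    then have "r \<le> dist g \<or> r \<le> dist (shift m 1 g)"
      by (auto simp: dist_pos Zd_shift far)
    then show "color g m = protocol_color p m g"
      unfolding r_def by (rule color_far_source[OF m])
  qed
  ultimately show ?thesis by (auto simp: pos_zero)
qed

end

theorem lemma7:
  fixes d :: nat and M :: "'x measure" and a :: "(nat \<Rightarrow> int) \<Rightarrow> 'x \<Rightarrow> 'x"
    and U'' U V :: "'x set" and c :: "'x \<times> nat \<Rightarrow> nat" and x0 x1 y :: 'x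
  assumes "d \<ge> 2"
    and "free_action d (space M) a"
    and "\<forall>g\<in>Zd d. a g \<in> M \<rightarrow>\<^sub>M M"
    and "y \<in> space M" and "U'' = orbit d a y"
    and "U \<subseteq> U''" and "V \<subseteq> U''"
    and "path_dist_gt d (space M) a U V (4 * d + 1)"
    and "x0 \<in> U''" and "x1 \<in> U''"
    and "is_edge_coloring d a (U \<union> V) (2 * d) c"
    and "follows_protocol d a (U \<union> V) c x0 U"
    and "follows_protocol d a (U \<union> V) c x1 V"
  shows "\<exists>c'. is_edge_coloring d a U'' (2 * d) c' \<and>
           (\<forall>e\<in>sedges d a (U \<union> V). c' e = c e) \<and>
           follows_protocol d a U'' c' x0 U \<and>
           follows_protocol d a U'' c' x1 V"
proof -
  have "x0 \<in> space M"
    using orbit_subset[of d "space M" a y] assms(2,4,5,9) by (auto simp: free_action_def)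
  interpret free_orbit d "space M" a x0
    using assms(2) \<open>x0 \<in> space M\<close> by unfold_locales
  have U'': "U'' = pos ` Zd d"
    using assms(4,5,9) orbit_eq_pos_image by simp
  obtain p where p: "p \<in> Zd d" "x1 = pos p"
    using assms(10) U'' by auto
  obtain c' where c': "is_edge_coloring d a U'' (2 * d) c'"
    "follows_protocol d a U'' c' x0 U" "follows_protocol d a U'' c' x1 V"
    using exists_interpolating_coloring[OF assms(1) p(1) assms(8)] U'' p(2) by auto
  have "c' e = c e" if e: "e \<in> sedges d a (U \<union> V)" for e
  proof -
    have e'': "e \<in> sedges d a U''"
      using e sedges_mono[of "U \<union> V" U''] assms(6,7) by blast
    from e consider "fst e \<in> U" | "fst e \<in> V"
      by (auto simp: sedges_def)
    then show ?thesis
      using follows_protocol_agree[OF assms(12) c'(2) e e'']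
        follows_protocol_agree[OF assms(13) c'(3) e e'']
      by cases auto
  qed
  with c' show ?thesis by blast
qed

end
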